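(* Let $m$ be a positive integer and define $\zeta^m(s,t):=\sum_{n=1}^\infty Z^m_n(s)\,n^{-t}$. Then for $\operatorname{Re}s>0$ and $\operatorname{Re}t>1$, $$\zeta^m(s,t)=\prod_{k=0}^m\zeta(sk+t).$$
   Context: For positive integers $m,N$, $Z^{m}_N(s):=\sum_{n_1|n_2|\cdots|n_m|N}(n_1n_2\cdots n_m)^{-s}$, the sum over all $m$-tuples of positive integers with $n_1\mid n_2\mid\cdots\mid n_m\mid N$. $\zeta$ is the Riemann zeta function. *)

theory Defs
  imports "HOL-Analysis.Analysis"
begin

definition div_chains :: "nat \<Rightarrow> nat \<Rightarrow> nat list set" where
  "div_chains m N = {ns. length ns = m \<and> (\<forall>i<m. 0 < ns ! i)
      \<and> (\<forall>i. Suc i < m \<longrightarrow> ns ! i dvd ns ! Suc i)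
      \<and> (0 < m \<longrightarrow> ns ! (m - 1) dvd N)}"

definition Zm :: "nat \<Rightarrow> nat \<Rightarrow> complex \<Rightarrow> complex" where
  "Zm m N s = (\<Sum>ns\<in>div_chains m N. (of_nat (prod_list ns) :: complex) powr (- s))"

text \<open>Riemann zeta function, given by its Dirichlet series (valid for Re z > 1,
  the only range in which it is used below).\<close>
definition riemann_zeta :: "complex \<Rightarrow> complex" where
  "riemann_zeta z = (\<Sum>n. (of_nat (Suc n) :: complex) powr (- z))"

end

theory Submission
  imports Defs
begin

text \<open>Splitting off the largest member d of a chain n_1 | ... | n_(m+1) | N gives
  Z^(m+1)_N(s) = sum_(d | N) Z^m_d(s) d^(-s), so the coefficients N^(-t) Z^(m+1)_N(s) are the
  Dirichlet convolution of d^(-(s+t)) Z^m_d(s) with e^(-t). As all series involved converge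
  absolutely for Re s \<ge> 0 and Re t > 1, this gives zeta^(m+1)(s, t) = zeta^m(s, s + t) zeta(t),
  and the product formula follows by induction on m from zeta^0(s, t) = zeta(t).\<close>

lemma has_sum_Suc_iff_atLeast_1:
  "((\<lambda>n. f (Suc n)) has_sum S) UNIV \<longleftrightarrow> (f has_sum S) {1..}"
  by (rule has_sum_reindex_bij_witness[where i = "\<lambda>n. n - 1" and j = Suc]) auto

lemma has_sum_riemann_zeta:
  assumes "Re z > 1"
  shows "((\<lambda>n. of_nat n powr (- z)) has_sum riemann_zeta z) {1..}"
proof -
  have "norm ((of_nat (Suc n) :: complex) powr (- z)) = real (Suc n) powr (- Re z)" for n
    by (subst norm_powr_real_powr) auto
  moreover have "summable (\<lambda>n. real (Suc n) powr (- Re z))"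
    using assms by (subst summable_Suc_iff) (simp add: summable_real_powr_iff)
  ultimately have abs: "summable (\<lambda>n. norm ((of_nat (Suc n) :: complex) powr (- z)))"
    by simp
  have "(\<lambda>n. (of_nat (Suc n) :: complex) powr (- z)) sums riemann_zeta z"
    unfolding riemann_zeta_def using summable_norm_cancel[OF abs] by (rule summable_sums)
  with abs show ?thesis
    by (subst has_sum_Suc_iff_atLeast_1[symmetric]) (rule norm_summable_imp_has_sum)
qed

lemma has_sum_mult_Times_complex:
  fixes f :: "'a \<Rightarrow> complex" and g :: "'b \<Rightarrow> complex"
  assumes f: "(f has_sum F) A" and g: "(g has_sum G) B"
  shows "((\<lambda>(x, y). f x * g y) has_sum F * G) (A \<times> B)"
proof (rule has_sum_SigmaI)
  show "((\<lambda>y. case (x, y) of (x, y) \<Rightarrow> f x * g y) has_sum f x * G) B" for x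
    using has_sum_cmult_right[OF g] by simp
  show "((\<lambda>x. f x * G) has_sum F * G) A"
    using f by (rule has_sum_cmult_left)
  have "(\<lambda>x. norm (f x)) summable_on A" "(\<lambda>y. norm (g y)) summable_on B"
    using f g summable_on_iff_abs_summable_on_complex has_sum_imp_summable by blast+
  then have "((\<lambda>y. norm (f x) * norm (g y)) has_sum norm (f x) * infsum (\<lambda>y. norm (g y)) B) B"
    and "(\<lambda>x. norm (f x) * infsum (\<lambda>y. norm (g y)) B) summable_on A" for x
    by (simp_all add: has_sum_cmult_right summable_on_cmult_left)
  then have "(\<lambda>(x, y). norm (f x) * norm (g y)) summable_on A \<times> B"
    by (intro summable_on_SigmaI) auto
  then show "(\<lambda>(x, y). f x * g y) summable_on A \<times> B"
    using abs_summable_summable[of "\<lambda>(x, y). f x * g y" "A \<times> B"]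
    by (simp add: case_prod_unfold norm_mult)
qed

lemma has_sum_dirichlet_convolution:
  fixes f g :: "nat \<Rightarrow> complex"
  assumes "(f has_sum F) {1..}" and "(g has_sum G) {1..}"
  shows "((\<lambda>n. \<Sum>d | d dvd n. f d * g (n div d)) has_sum F * G) {1..}"
proof (rule has_sum_SigmaD)
  have "((\<lambda>(d, e). f d * g e) has_sum F * G) ({1..} \<times> {1..})"
    using assms by (rule has_sum_mult_Times_complex)
  also have "?this \<longleftrightarrow> ((\<lambda>(n, d). f d * g (n div d)) has_sum F * G) (SIGMA n:{1..}. {d. d dvd n})"
    by (rule has_sum_reindex_bij_witness[where i = "\<lambda>(n, d). (d, n div d)" and j = "\<lambda>(d, e). (d * e, d)"])
       (auto simp: Suc_le_eq)
  finally show "((\<lambda>(n, d). f d * g (n div d)) has_sum F * G) (SIGMA n:{1..}. {d. d dvd n})" .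
  show "((\<lambda>d. case (n, d) of (n, d) \<Rightarrow> f d * g (n div d)) has_sum (\<Sum>d | d dvd n. f d * g (n div d))) {d. d dvd n}"
    if "n \<in> {1..}" for n
    using that by (intro has_sum_finiteI) (auto intro: finite_divisors_nat)
qed

lemma div_chains_0: "div_chains 0 N = {[]}"
  by (auto simp: div_chains_def)

lemma snoc_in_div_chains_Suc_iff:
  assumes "N > 0"
  shows "ns @ [d] \<in> div_chains (Suc m) N \<longleftrightarrow> d dvd N \<and> ns \<in> div_chains m d"
proof (cases "length ns = m")
  case True
  have pos: "(\<forall>i<Suc m. 0 < (ns @ [d]) ! i) \<longleftrightarrow> (\<forall>i<m. 0 < ns ! i) \<and> 0 < d"
    using True by (auto simp: nth_append less_Suc_eq)
  have chain: "(\<forall>i. Suc i < Suc m \<longrightarrow> (ns @ [d]) ! i dvd (ns @ [d]) ! Suc i) \<longleftrightarrow>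
      (\<forall>i. Suc i < m \<longrightarrow> ns ! i dvd ns ! Suc i) \<and> (0 < m \<longrightarrow> ns ! (m - 1) dvd d)"
  proof -
    have inner: "(ns @ [d]) ! i dvd (ns @ [d]) ! Suc i \<longleftrightarrow> ns ! i dvd ns ! Suc i" if "Suc i < m" for i
      using True that by (simp add: nth_append)
    have final: "(ns @ [d]) ! i dvd (ns @ [d]) ! Suc i \<longleftrightarrow> ns ! i dvd d" if "Suc i = m" for i
      using True that by (auto simp: nth_append)
    show ?thesis
    proof (intro iffI conjI allI impI)
      fix i assume "\<forall>i. Suc i < Suc m \<longrightarrow> (ns @ [d]) ! i dvd (ns @ [d]) ! Suc i" "Suc i < m"
      then show "ns ! i dvd ns ! Suc i" using inner by auto
    next
      assume snoc_chain: "\<forall>i. Suc i < Suc m \<longrightarrow> (ns @ [d]) ! i dvd (ns @ [d]) ! Suc i" and "0 < m"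
      then have "(ns @ [d]) ! (m - 1) dvd (ns @ [d]) ! Suc (m - 1)"
        using snoc_chain[rule_format, of "m - 1"] by simp
      then show "ns ! (m - 1) dvd d" using final[of "m - 1"] \<open>0 < m\<close> by simp
    next
      fix i assume "(\<forall>i. Suc i < m \<longrightarrow> ns ! i dvd ns ! Suc i) \<and> (0 < m \<longrightarrow> ns ! (m - 1) dvd d)"
        and "Suc i < Suc m"
      then show "(ns @ [d]) ! i dvd (ns @ [d]) ! Suc i"
        using inner final by (cases "Suc i < m") (auto simp: less_Suc_eq)
    qed
  qed
  show ?thesis
    using True assms unfolding div_chains_def mem_Collect_eq pos chain
    by (auto intro: dvd_pos_nat)
qed (auto simp: div_chains_def)

lemma div_chains_Suc:
  assumes "N > 0"
  shows "div_chains (Suc m) N = (\<lambda>(d, ns). ns @ [d]) ` (SIGMA d:{d. d dvd N}. div_chains m d)"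
proof (intro equalityI subsetI)
  fix xs assume xs: "xs \<in> div_chains (Suc m) N"
  then have "xs = butlast xs @ [last xs]"
    by (intro append_butlast_last_id[symmetric]) (auto simp: div_chains_def)
  with xs assms show "xs \<in> (\<lambda>(d, ns). ns @ [d]) ` (SIGMA d:{d. d dvd N}. div_chains m d)"
    by (metis (no_types, lifting) SigmaI image_eqI mem_Collect_eq snoc_in_div_chains_Suc_iff case_prod_conv)
qed (use assms snoc_in_div_chains_Suc_iff in auto)

lemma finite_div_chains: "N > 0 \<Longrightarrow> finite (div_chains m N)"
proof (induction m arbitrary: N)
  case 0
  then show ?case by (simp add: div_chains_0)
next
  case (Suc m)
  then show ?case
    by (auto simp: div_chains_Suc finite_divisors_nat intro!: finite_imageI finite_SigmaI intro: dvd_pos_nat)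
qed

lemma Zm_0: "Zm 0 N s = 1"
  by (simp add: Zm_def div_chains_0)

lemma powr_of_nat_mult: "(of_nat a * of_nat b :: complex) powr z = of_nat a powr z * of_nat b powr z"
  by (simp add: powr_times_real)

lemma Zm_Suc:
  assumes "N > 0"
  shows "Zm (Suc m) N s = (\<Sum>d | d dvd N. Zm m d s * of_nat d powr (- s))"
proof -
  have "Zm (Suc m) N s = (\<Sum>(d, ns)\<in>(SIGMA d:{d. d dvd N}. div_chains m d).
          (of_nat (prod_list ns * d) :: complex) powr (- s))"
    unfolding Zm_def div_chains_Suc[OF assms]
    by (subst sum.reindex) (auto simp: inj_on_def case_prod_unfold)
  also have "\<dots> = (\<Sum>d | d dvd N. \<Sum>ns\<in>div_chains m d. (of_nat (prod_list ns * d) :: complex) powr (- s))"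
    using assms by (subst sum.Sigma) (auto simp: finite_divisors_nat intro: finite_div_chains dvd_pos_nat)
  also have "\<dots> = (\<Sum>d | d dvd N. Zm m d s * of_nat d powr (- s))"
    by (simp add: Zm_def powr_of_nat_mult sum_distrib_right)
  finally show ?thesis .
qed

lemma Zm_Suc_mult_powr:
  assumes "N > 0"
  shows "Zm (Suc m) N s * of_nat N powr (- t) =
    (\<Sum>d | d dvd N. Zm m d s * of_nat d powr (- (s + t)) * of_nat (N div d) powr (- t))"
  unfolding Zm_Suc[OF assms] sum_distrib_right
proof (rule sum.cong)
  fix d assume "d \<in> {d. d dvd N}"
  then have "(of_nat N :: complex) = of_nat d * of_nat (N div d)"
    by (simp flip: of_nat_mult)
  then have "(of_nat N :: complex) powr (- t) = of_nat d powr (- t) * of_nat (N div d) powr (- t)"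
    by (simp only: powr_of_nat_mult)
  moreover have "(of_nat d :: complex) powr (- (s + t)) = of_nat d powr (- s) * of_nat d powr (- t)"
    by (simp flip: powr_add)
  ultimately show "Zm m d s * of_nat d powr (- s) * of_nat N powr (- t) =
      Zm m d s * of_nat d powr (- (s + t)) * of_nat (N div d) powr (- t)"
    by (simp add: mult_ac)
qed simp

lemma has_sum_Zm_dirichlet_series:
  assumes "Re s \<ge> 0" and "Re t > 1"
  shows "((\<lambda>N. Zm m N s * of_nat N powr (- t)) has_sum (\<Prod>k=0..m. riemann_zeta (s * of_nat k + t))) {1..}"
  using assms(2)
proof (induction m arbitrary: t)
  case 0
  then show ?case using has_sum_riemann_zeta[of t] by (simp add: Zm_0)
next
  case (Suc m)
  have "((\<lambda>N. Zm m N s * of_nat N powr (- (s + t))) has_sum (\<Prod>k=0..m. riemann_zeta (s * of_nat k + (s + t)))) {1..}"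
    using Suc.IH[of "s + t"] Suc.prems assms(1) by simp
  from has_sum_dirichlet_convolution[OF this has_sum_riemann_zeta[OF Suc.prems]]
  have "((\<lambda>N. Zm (Suc m) N s * of_nat N powr (- t)) has_sum
      (\<Prod>k=0..m. riemann_zeta (s * of_nat k + (s + t))) * riemann_zeta t) {1..}"
    by (rule has_sum_cong[THEN iffD1, rotated]) (simp add: Zm_Suc_mult_powr)
  also have "(\<Prod>k=0..m. riemann_zeta (s * of_nat k + (s + t))) * riemann_zeta t
      = (\<Prod>k=0..Suc m. riemann_zeta (s * of_nat k + t))"
    by (subst prod.atLeast0_atMost_Suc_shift) (simp add: algebra_simps)
  finally show ?case .
qed

theorem mainTheorem5:
  fixes m :: nat and s t :: complex
  assumes "m \<ge> 1" and "Re s > 0" and "Re t > 1"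
  shows "(\<lambda>n. Zm m (Suc n) s * (of_nat (Suc n) :: complex) powr (- t))
           sums (\<Prod>k=0..m. riemann_zeta (s * of_nat k + t))"
proof -
  have "((\<lambda>N. Zm m N s * of_nat N powr (- t)) has_sum (\<Prod>k=0..m. riemann_zeta (s * of_nat k + t))) {1..}"
    using assms by (intro has_sum_Zm_dirichlet_series) auto
  then show ?thesis
    unfolding has_sum_Suc_iff_atLeast_1[symmetric] by (rule has_sum_imp_sums)
qed

end
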